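(* Let $m\ge2$ and $t\ge1$ be integers, and put $g_+=\gcd(m+1,2^t+1)$, $g_-=\gcd(m+1,2^t-1)$. Then the set of all $a\in\{1,2,\dots,m\}$ satisfying $f_2^t(a)=a$ equals $$\Big\{\tfrac{m+1}{g_+}\,\xi_1:\ \xi_1 \text{ odd},\ 1\le \xi_1<g_+\Big\}\ \cup\ \Big\{\tfrac{m+1}{g_-}\,\xi_2:\ \xi_2 \text{ odd},\ 1\le\xi_2<g_-\Big\}.$$
   Context: For an integer $m\ge2$, $X=\{0,1,\dots,m^2-1\}$, each element written with exactly two base-$m$ digits (leading zeros allowed), and $f(x)=D(x)-A(x)$ is the two-digit base-$m$ Kaprekar map ($D(x)$, $A(x)$: digits of $x$ in nonincreasing, resp. nondecreasing, order). The map $f_2:\{0,1,\dots,m\}\to\{0,1,\dots,m\}$ is defined by $f(a(m-1))=f_2(a)(m-1)$; explicitly $f_2(0)=0$ and $f_2(a)=|2a-m-1|$ for $1\le a\le m$. $f_2^t$ denotes the $t$-fold iterate. *)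

theory Defs
  imports Main
begin

definition f2 :: "nat \<Rightarrow> nat \<Rightarrow> nat" where
  "f2 m a = (if a = 0 then 0 else nat \<bar>2 * int a - int m - 1\<bar>)"

end

theory Submission
  imports Defs
begin

text \<open>
  Put n = m + 1 and encode a \<in> {0..n} by any y with a = |y mod 2n - n| (e.g. y = n - a).
  This triangle wave turns f_2 into doubling: if y encodes a, then 2y encodes f_2(a), except
  when y = n (mod 2n), i.e. a = 0. An orbit of a nonzero a that reaches 0 stays there, while
  2^t y = 0 (mod 2n) then encodes n; so in both descriptions a is t-periodic iff 2^t y encodes
  a. The wave identifies exactly y and -y (mod 2n), hence a is t-periodic iff 2n divides
  (2^t - 1)(n - a) or (2^t + 1)(n - a). The factors 2^t \<plusminus> 1 are odd, so this says that
  2n/g divides n - a for g = gcd n (2^t \<plusminus> 1), i.e. that a is an odd multiple of n/g below n.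
\<close>

definition triangle_wave :: "int \<Rightarrow> int \<Rightarrow> int" where
  "triangle_wave n y = \<bar>y mod (2 * n) - n\<bar>"

lemma triangle_wave_eq_iff:
  assumes "0 < n"
  shows "triangle_wave n z = triangle_wave n y \<longleftrightarrow>
           z mod (2 * n) = y mod (2 * n) \<or> z mod (2 * n) = (- y) mod (2 * n)"
proof -
  define r s where "r = y mod (2 * n)" and "s = z mod (2 * n)"
  have "0 \<le> r" "r < 2 * n" "0 \<le> s" "s < 2 * n"
    using assms by (simp_all add: r_def s_def)
  moreover have "(- y) mod (2 * n) = (if r = 0 then 0 else 2 * n - r)"
    by (simp add: r_def zmod_zminus1_eq_if)
  ultimately show ?thesis
    unfolding triangle_wave_def r_def[symmetric] s_def[symmetric] by auto
qed

lemma triangle_wave_double_power_of_zero: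
  assumes "triangle_wave n z = 0" and "0 < k"
  shows "triangle_wave n (2 ^ k * z) = \<bar>n\<bar>"
proof -
  obtain q where "z = 2 * n * q + n"
    using assms(1) div_mult_mod_eq[of z "2 * n"] by (simp add: triangle_wave_def) (metis mult.commute)
  moreover obtain j where "k = Suc j"
    using assms(2) gr0_implies_Suc by blast
  ultimately have "2 ^ k * z = 2 * n * (2 ^ k * q + 2 ^ j)"
    by (simp add: algebra_simps)
  then show ?thesis
    by (simp add: triangle_wave_def)
qed

lemma f2_triangle_wave:
  assumes "triangle_wave (int m + 1) y \<noteq> 0"
  shows "f2 m (nat (triangle_wave (int m + 1) y)) = nat (triangle_wave (int m + 1) (2 * y))"
proof -
  define n r where "n = int m + 1" and "r = y mod (2 * n)"
  have "0 \<le> r" "r < 2 * n" "r \<noteq> n"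
    using assms by (simp_all add: n_def r_def triangle_wave_def)
  have double_mod: "(2 * y) mod (2 * n) = (if r < n then 2 * r else 2 * r - 2 * n)"
  proof -
    have "(2 * y) mod (2 * n) = (2 * r) mod (2 * n)"
      by (simp add: r_def mod_mult_right_eq)
    also have "\<dots> = (if r < n then 2 * r else 2 * r - 2 * n)"
    proof (cases "r < n")
      case False
      have "(2 * r) mod (2 * n) = (2 * r - 2 * n + 2 * n) mod (2 * n)"
        by simp
      also have "\<dots> = 2 * r - 2 * n"
        unfolding mod_add_self2 using False \<open>r < 2 * n\<close> by (intro mod_pos_pos_trivial) simp_all
      finally show ?thesis
        using False by simp
    qed (use \<open>0 \<le> r\<close> in simp)
    finally show ?thesis .
  qed
  have "f2 m (nat (triangle_wave n y)) = nat \<bar>2 * \<bar>r - n\<bar> - n\<bar>"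
    using \<open>r \<noteq> n\<close> by (simp add: f2_def triangle_wave_def flip: r_def) (simp add: n_def algebra_simps)
  also have "\<dots> = nat (triangle_wave n (2 * y))"
    unfolding triangle_wave_def double_mod by auto
  finally show ?thesis
    by (simp only: n_def)
qed

lemma f2_0 [simp]: "f2 m 0 = 0"
  by (simp add: f2_def)

lemma funpow_f2_triangle_wave:
  "(f2 m ^^ k) (nat (triangle_wave (int m + 1) y)) =
     (if \<exists>j<k. triangle_wave (int m + 1) (2 ^ j * y) = 0 then 0
      else nat (triangle_wave (int m + 1) (2 ^ k * y)))"
proof (induction k)
  case 0
  show ?case by simp
next
  case (Suc k)
  show ?case
  proof (cases "\<exists>j<Suc k. triangle_wave (int m + 1) (2 ^ j * y) = 0")
    case True
    then have "(f2 m ^^ k) (nat (triangle_wave (int m + 1) y)) = 0"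
      using Suc.IH less_Suc_eq by auto
    with True show ?thesis
      by simp
  next
    case False
    then have "\<not> (\<exists>j<k. triangle_wave (int m + 1) (2 ^ j * y) = 0)"
      and "triangle_wave (int m + 1) (2 ^ k * y) \<noteq> 0"
      by auto
    with False Suc.IH f2_triangle_wave[of m "2 ^ k * y"] show ?thesis
      by (auto simp: mult.assoc)
  qed
qed

lemma funpow_f2_eq_self_iff:
  assumes "1 \<le> a" and "a \<le> m"
  shows "(f2 m ^^ t) a = a \<longleftrightarrow>
           2 * (m + 1) dvd (2 ^ t - 1) * (m + 1 - a) \<or> 2 * (m + 1) dvd (2 ^ t + 1) * (m + 1 - a)"
proof -
  define n y where "n = int m + 1" and "y = n - int a"
  have wave_y: "triangle_wave n y = int a"
    using assms by (simp add: triangle_wave_def n_def y_def)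
  have iterate: "(f2 m ^^ t) a =
      (if \<exists>j<t. triangle_wave n (2 ^ j * y) = 0 then 0 else nat (triangle_wave n (2 ^ t * y)))"
    using funpow_f2_triangle_wave[where k = t and m = m and y = y] wave_y by (auto simp: n_def)
  have "(f2 m ^^ t) a = a \<longleftrightarrow> triangle_wave n (2 ^ t * y) = triangle_wave n y"
  proof
    assume fixed: "(f2 m ^^ t) a = a"
    have "\<not> (\<exists>j<t. triangle_wave n (2 ^ j * y) = 0)"
    proof
      assume "\<exists>j<t. triangle_wave n (2 ^ j * y) = 0"
      with iterate fixed assms(1) show False
        by simp
    qed
    with iterate fixed have "nat (triangle_wave n (2 ^ t * y)) = a"
      by simp
    with wave_y show "triangle_wave n (2 ^ t * y) = triangle_wave n y"
      by (simp add: triangle_wave_def)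
  next
    assume periodic: "triangle_wave n (2 ^ t * y) = triangle_wave n y"
    have "\<not> (\<exists>j<t. triangle_wave n (2 ^ j * y) = 0)"
    proof
      assume "\<exists>j<t. triangle_wave n (2 ^ j * y) = 0"
      then obtain j where "j < t" "triangle_wave n (2 ^ j * y) = 0"
        by blast
      then have "triangle_wave n (2 ^ (t - j) * (2 ^ j * y)) = \<bar>n\<bar>"
        by (intro triangle_wave_double_power_of_zero) simp_all
      moreover have "2 ^ (t - j) * (2 ^ j * y) = (2 ^ t * y :: int)"
        using \<open>j < t\<close> by (simp flip: mult.assoc power_add)
      ultimately show False
        using periodic wave_y assms(2) by (simp add: n_def)
    qed
    with iterate periodic wave_y show "(f2 m ^^ t) a = a"
      by simp
  qed
  also have "\<dots> \<longleftrightarrow> 2 * n dvd 2 ^ t * y - y \<or> 2 * n dvd 2 ^ t * y - (- y)"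
    using triangle_wave_eq_iff[of n] by (simp only: n_def mod_eq_dvd_iff)
  also have "\<dots> \<longleftrightarrow> 2 * n dvd (2 ^ t - 1) * y \<or> 2 * n dvd (2 ^ t + 1) * y"
    by (simp only: left_diff_distrib distrib_right diff_minus_eq_add mult_1)
  also have "\<dots> \<longleftrightarrow>
      2 * (m + 1) dvd (2 ^ t - 1) * (m + 1 - a) \<or> 2 * (m + 1) dvd (2 ^ t + 1) * (m + 1 - a)"
  proof -
    have "int (m + 1 - a) = y"
      using assms by (simp add: n_def y_def)
    then have casts: "2 * n = int (2 * (m + 1))"
        "(2 ^ t - 1) * y = int ((2 ^ t - 1) * (m + 1 - a))"
        "(2 ^ t + 1) * y = int ((2 ^ t + 1) * (m + 1 - a))"
      by (simp_all only: of_nat_mult) (simp_all add: n_def)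
    show ?thesis
      unfolding casts of_nat_dvd_iff ..
  qed
  finally show ?thesis .
qed

lemma two_mult_dvd_odd_mult_iff:
  fixes n c x :: nat
  assumes "odd c"
  shows "2 * n dvd c * x \<longleftrightarrow> 2 * (n div gcd n c) dvd x"
proof -
  define g n' c' where "g = gcd n c" and "n' = n div g" and "c' = c div g"
  have "g \<noteq> 0"
    using assms by (auto simp: g_def)
  have n: "n = g * n'" and c: "c = g * c'"
    by (simp_all add: g_def n'_def c'_def)
  have "coprime n' c'"
    using assms div_gcd_coprime[of n c] by (auto simp: g_def n'_def c'_def)
  moreover have "odd c'"
    using assms c by simp
  ultimately have "coprime (2 * n') c'"
    by simp
  have "2 * n dvd c * x \<longleftrightarrow> g * (2 * n') dvd g * (c' * x)"
    by (simp add: n c ac_simps)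
  also have "\<dots> \<longleftrightarrow> 2 * n' dvd c' * x"
    using \<open>g \<noteq> 0\<close> by (rule dvd_times_left_cancel_iff)
  also have "\<dots> \<longleftrightarrow> 2 * n' dvd x"
    using \<open>coprime (2 * n') c'\<close> by (rule coprime_dvd_mult_right_iff)
  finally show ?thesis
    by (simp add: n'_def g_def)
qed

lemma mem_odd_multiples_iff:
  fixes n g a :: nat
  assumes "0 < n" and "g dvd n" and "odd g"
  shows "a \<in> {n div g * \<xi> | \<xi>. odd \<xi> \<and> 1 \<le> \<xi> \<and> \<xi> < g} \<longleftrightarrow>
           0 < a \<and> a < n \<and> 2 * (n div g) dvd n - a"
proof -
  define d where "d = n div g"
  have n: "n = d * g" and "0 < d"
    using assms by (auto simp: d_def)
  show ?thesis
    unfolding d_def[symmetric]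
  proof
    assume "a \<in> {d * \<xi> | \<xi>. odd \<xi> \<and> 1 \<le> \<xi> \<and> \<xi> < g}"
    then obtain \<xi> where a: "a = d * \<xi>" and "odd \<xi>" "1 \<le> \<xi>" "\<xi> < g"
      by blast
    have "n - a = d * (g - \<xi>)"
      by (simp add: n a diff_mult_distrib2)
    moreover have "even (g - \<xi>)"
      using \<open>odd \<xi>\<close> \<open>\<xi> < g\<close> assms(3) by simp
    ultimately have "2 * d dvd n - a"
      by auto
    moreover have "0 < a" "a < n"
      using \<open>0 < d\<close> \<open>1 \<le> \<xi>\<close> \<open>\<xi> < g\<close> by (simp_all add: n a)
    ultimately show "0 < a \<and> a < n \<and> 2 * d dvd n - a"
      by blast
  next
    assume "0 < a \<and> a < n \<and> 2 * d dvd n - a"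
    then obtain k where "0 < a" "a < n" and k: "n - a = 2 * d * k"
      by auto
    then have a: "a = d * (g - 2 * k)"
      by (simp add: n diff_mult_distrib2 ac_simps)
    then have "2 * k < g"
      using \<open>0 < a\<close> by (cases "2 * k < g") auto
    moreover have "0 < k"
      using k \<open>a < n\<close> by (cases k) auto
    ultimately have "odd (g - 2 * k)" "1 \<le> g - 2 * k" "g - 2 * k < g"
      using assms(3) by auto
    with a show "a \<in> {d * \<xi> | \<xi>. odd \<xi> \<and> 1 \<le> \<xi> \<and> \<xi> < g}"
      by blast
  qed
qed

theorem theorem3p3p2:
  fixes m t :: nat
  assumes "m \<ge> 2" and "t \<ge> 1"
  defines "gp \<equiv> gcd (m + 1) (2 ^ t + 1)"
      and "gm \<equiv> gcd (m + 1) (2 ^ t - 1)"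
  shows "{a \<in> {1..m}. (f2 m ^^ t) a = a} =
           {(m + 1) div gp * \<xi> | \<xi>. odd \<xi> \<and> 1 \<le> \<xi> \<and> \<xi> < gp}
         \<union> {(m + 1) div gm * \<xi> | \<xi>. odd \<xi> \<and> 1 \<le> \<xi> \<and> \<xi> < gm}"
proof -
  have odd: "odd (2 ^ t - 1 :: nat)" "odd (2 ^ t + 1 :: nat)"
    using \<open>t \<ge> 1\<close> by simp_all
  then have "odd gm" "odd gp"
    unfolding gm_def gp_def by (meson dvd_trans gcd_dvd2)+
  have "gm dvd m + 1" "gp dvd m + 1"
    unfolding gm_def gp_def by simp_all
  show ?thesis (is "?fixed = ?odd_multiples")
  proof (rule set_eqI)
    fix a
    have "a \<in> ?fixed \<longleftrightarrow> 1 \<le> a \<and> a \<le> m \<and>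
        (2 * (m + 1) dvd (2 ^ t - 1) * (m + 1 - a) \<or> 2 * (m + 1) dvd (2 ^ t + 1) * (m + 1 - a))"
      using funpow_f2_eq_self_iff[of a m t] by auto
    also have "\<dots> \<longleftrightarrow>
        0 < a \<and> a < m + 1 \<and> 2 * ((m + 1) div gp) dvd m + 1 - a \<or>
        0 < a \<and> a < m + 1 \<and> 2 * ((m + 1) div gm) dvd m + 1 - a"
      unfolding gm_def gp_def two_mult_dvd_odd_mult_iff[OF odd(1)] two_mult_dvd_odd_mult_iff[OF odd(2)]
      by auto
    also have "\<dots> \<longleftrightarrow> a \<in> ?odd_multiples"
      unfolding Un_iff
      using mem_odd_multiples_iff[of "m + 1" gp a] mem_odd_multiples_iff[of "m + 1" gm a]
        \<open>odd gp\<close> \<open>odd gm\<close> \<open>gp dvd m + 1\<close> \<open>gm dvd m + 1\<close>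
      by simp
    finally show "a \<in> ?fixed \<longleftrightarrow> a \<in> ?odd_multiples" .
  qed
qed

end
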